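(* In the setting of the switching procedure below (with $\lambda=\Theta(\log n)$ and $k=\Theta(\lambda\log n)$), let $D:=\frac{2en\ln n}{k}$. Then $D=\Theta\left(\frac{n}{\log n}\right)$, and the probability that the procedure switches to the $(1+(\lambda,\lambda))$ GA before the $(1+1)$ EA has reached an individual at distance at most $D$ from the optimum is at most $1/n$.
   Context: The procedure maximizes $\mathrm{OneMax}(x)=\sum_{i=1}^n x_i$ on $\{0,1\}^n$ (optimum $1^n$; distance = number of zero-bits). It starts from a uniformly random point and runs the $(1+1)$ EA (each iteration: create one offspring by flipping each bit independently with probability $1/n$, accept it if its fitness is at least the current one) until, for the first time, $k$ consecutive $(1+1)$ EA iterations fail to create a strictly better offspring; then it switches irrevocably to the $(1+(\lambda,\lambda))$ GA with population size $\lambda$ (each iteration: sample $\ell\sim\mathrm{Bin}(n,\lambda/n)$, create $\lambda$ offspring each flipping exactly $\ell$ uniformly random distinct positions, take a best one $x'$; create $\lambda$ crossover offspring each taking per position the bit of $x'$ with probability $1/\lambda$ and of $x$ otherwise; accept a best one $y$ if $f(y)\ge f(x)$). Here $\lambda=\lambda(n)=\Theta(\log n)$ and $k=k(n)=\Theta(\lambda\log n)$. *)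

theory Defs
  imports "HOL-Probability.Probability" "HOL-Library.Landau_Symbols"
begin

text \<open>Bit strings of length n are represented as functions nat => bool that are
  False outside the positions 0..n-1.\<close>

definition bitstrings :: "nat \<Rightarrow> (nat \<Rightarrow> bool) set" where
  "bitstrings n = {x. \<forall>i. n \<le> i \<longrightarrow> \<not> x i}"

definition onemax :: "nat \<Rightarrow> (nat \<Rightarrow> bool) \<Rightarrow> nat" where
  "onemax n x = card {i. i < n \<and> x i}"

definition dist_opt :: "nat \<Rightarrow> (nat \<Rightarrow> bool) \<Rightarrow> nat" where
  "dist_opt n x = n - onemax n x"

definition init_pmf :: "nat \<Rightarrow> (nat \<Rightarrow> bool) pmf" where
  "init_pmf n = pmf_of_set (bitstrings n)"

definition mask_pmf :: "nat \<Rightarrow> (nat \<Rightarrow> bool) pmf" where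
  "mask_pmf n = Pi_pmf {..<n} False (\<lambda>_. bernoulli_pmf (1 / real n))"

definition flip :: "(nat \<Rightarrow> bool) \<Rightarrow> (nat \<Rightarrow> bool) \<Rightarrow> (nat \<Rightarrow> bool)" where
  "flip x m = (\<lambda>i. x i \<noteq> m i)"

text \<open>One (1+1) EA iteration on the state (current individual, number of
  consecutive iterations without strict improvement), using mask m.\<close>
definition ea_step :: "nat \<Rightarrow> (nat \<Rightarrow> bool) \<times> nat \<Rightarrow> (nat \<Rightarrow> bool) \<Rightarrow> (nat \<Rightarrow> bool) \<times> nat" where
  "ea_step n s m =
     (let x = fst s; c = snd s; y = flip x m in
      if onemax n y > onemax n x then (y, 0)
      else if onemax n y = onemax n x then (y, Suc c)
      else (x, Suc c))"

primrec ea_run :: "nat \<Rightarrow> (nat \<Rightarrow> bool) \<Rightarrow> (nat \<Rightarrow> bool) stream \<Rightarrow> nat \<Rightarrow> (nat \<Rightarrow> bool) \<times> nat" where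
  "ea_run n x0 \<omega> 0 = (x0, 0)"
| "ea_run n x0 \<omega> (Suc t) = ea_step n (ea_run n x0 \<omega> t) (\<omega> !! t)"

definition ea_space :: "nat \<Rightarrow> ((nat \<Rightarrow> bool) \<times> (nat \<Rightarrow> bool) stream) measure" where
  "ea_space n = measure_pmf (init_pmf n) \<Otimes>\<^sub>M stream_space (measure_pmf (mask_pmf n))"

text \<open>Event: the procedure switches (k consecutive non-improving EA iterations
  occur) at a time t at which the EA has not yet reached (at any time s \<le> t)
  an individual at distance at most D from the optimum.\<close>
definition switch_early :: "nat \<Rightarrow> nat \<Rightarrow> real \<Rightarrow> ((nat \<Rightarrow> bool) \<times> (nat \<Rightarrow> bool) stream) set" where
  "switch_early n k D =
     {(x0, \<omega>). \<exists>t. snd (ea_run n x0 \<omega> t) = k \<and>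
                  (\<forall>s\<le>t. real (dist_opt n (fst (ea_run n x0 \<omega> s))) > D)}"

end

theory Submission
  imports Defs
begin

(* While the EA is at distance d > D, flipping exactly one of the d zero bits improves the
  fitness, so every iteration improves with probability at least d/(e n). A streak of k
  failures at distance d therefore has probability at most (1 - d/(e n))^k \<le> exp(-d k/(e n)),
  which is at most 1/n^2 by the choice of D. The distance never increases, so at most n
  distances are visited, and a union bound gives 1/n. The union bound is carried by a potential
  on EA states that does not increase in expectation along an iteration; induction over a
  finite time horizon bounds the probability of an early switch by the potential of the
  start state. *)

(* Restricting the masks makes every iteration depend on
  one of finitely many values, which is what makes the trajectory measurable for the
  coordinate sigma algebra of the stream space. *)
definition restrict_bits :: "nat \<Rightarrow> (nat \<Rightarrow> bool) \<Rightarrow> (nat \<Rightarrow> bool)" where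
  "restrict_bits n x = (\<lambda>i. i < n \<and> x i)"

lemma restrict_bits_in_bitstrings: "restrict_bits n x \<in> bitstrings n"
  unfolding restrict_bits_def bitstrings_def by auto

lemma onemax_restrict_bits: "onemax n (restrict_bits n x) = onemax n x"
  unfolding onemax_def restrict_bits_def by auto

lemma dist_opt_restrict_bits: "dist_opt n (restrict_bits n x) = dist_opt n x"
  unfolding dist_opt_def by (simp add: onemax_restrict_bits)

lemma restrict_bits_flip:
  "restrict_bits n (flip x m) = flip (restrict_bits n x) (restrict_bits n m)"
  unfolding restrict_bits_def flip_def by auto

lemma ea_step_restrict_bits:
  "ea_step n (restrict_bits n x, c) (restrict_bits n m) =
   apfst (restrict_bits n) (ea_step n (x, c) m)"
  unfolding ea_step_def Let_def
  by (simp add: restrict_bits_flip[symmetric] onemax_restrict_bits)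

primrec ea_run_from ::
  "nat \<Rightarrow> (nat \<Rightarrow> bool) \<times> nat \<Rightarrow> (nat \<Rightarrow> bool) stream \<Rightarrow> nat \<Rightarrow> (nat \<Rightarrow> bool) \<times> nat" where
  "ea_run_from n s \<omega> 0 = s"
| "ea_run_from n s \<omega> (Suc t) = ea_step n (ea_run_from n s \<omega> t) (\<omega> !! t)"

lemma ea_run_eq_ea_run_from: "ea_run n x0 \<omega> t = ea_run_from n (x0, 0) \<omega> t"
  by (induction t) auto

lemma ea_run_from_Suc_shift:
  "ea_run_from n s \<omega> (Suc t) = ea_run_from n (ea_step n s (shd \<omega>)) (stl \<omega>) t"
  by (induction t) auto

lemma ea_run_from_restrict_bits:
  "ea_run_from n (apfst (restrict_bits n) s) (smap (restrict_bits n) \<omega>) t =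
   apfst (restrict_bits n) (ea_run_from n s \<omega> t)"
proof (induction t)
  case (Suc t)
  then show ?case
    by (cases "ea_run_from n s \<omega> t") (simp add: ea_step_restrict_bits)
qed simp

definition ea_run_restr ::
  "nat \<Rightarrow> (nat \<Rightarrow> bool) \<times> nat \<Rightarrow> (nat \<Rightarrow> bool) stream \<Rightarrow> nat \<Rightarrow> (nat \<Rightarrow> bool) \<times> nat" where
  "ea_run_restr n s \<omega> t = ea_run_from n s (smap (restrict_bits n) \<omega>) t"

lemma ea_run_restr_0 [simp]: "ea_run_restr n s \<omega> 0 = s"
  by (simp add: ea_run_restr_def)

lemma ea_run_restr_Suc_shift:
  "ea_run_restr n s \<omega> (Suc t) = ea_run_restr n (ea_step n s (restrict_bits n (shd \<omega>))) (stl \<omega>) t"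
  unfolding ea_run_restr_def by (subst ea_run_from_Suc_shift) simp

lemma ea_run_restr_ea_run:
  "ea_run_restr n (restrict_bits n x0, 0) \<omega> t = apfst (restrict_bits n) (ea_run n x0 \<omega> t)"
  using ea_run_from_restrict_bits[of n "(x0, 0)" \<omega> t]
  by (simp add: ea_run_restr_def ea_run_eq_ea_run_from)

definition switch_within ::
  "nat \<Rightarrow> nat \<Rightarrow> real \<Rightarrow> nat \<Rightarrow> (nat \<Rightarrow> bool) \<times> nat \<Rightarrow> (nat \<Rightarrow> bool) stream set" where
  "switch_within n k D T s =
     {\<omega>. \<exists>t\<le>T. snd (ea_run_restr n s \<omega> t) = k \<and>
              (\<forall>u\<le>t. D < real (dist_opt n (fst (ea_run_restr n s \<omega> u))))}"

lemma switch_within_0: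
  "switch_within n k D 0 s = {\<omega>. snd s = k \<and> D < real (dist_opt n (fst s))}"
  unfolding switch_within_def by auto

lemma switch_within_Suc:
  "switch_within n k D (Suc T) s =
     {\<omega>. D < real (dist_opt n (fst s)) \<and>
          (snd s = k \<or> stl \<omega> \<in> switch_within n k D T (ea_step n s (restrict_bits n (shd \<omega>))))}"
  unfolding switch_within_def less_Suc_eq_le[symmetric] Ex_less_Suc2 All_less_Suc2
  by (auto simp: ea_run_restr_Suc_shift)

lemma finite_bitstrings: "finite (bitstrings n)"
proof -
  have "bitstrings n \<subseteq> (\<lambda>A i. i \<in> A) ` Pow {..<n}"
  proof
    fix x assume "x \<in> bitstrings n"
    then have "x = (\<lambda>i. i \<in> {i. i < n \<and> x i})"
      unfolding bitstrings_def by (auto simp: fun_eq_iff not_le[symmetric])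
    then show "x \<in> (\<lambda>A i. i \<in> A) ` Pow {..<n}" by blast
  qed
  then show ?thesis by (rule finite_subset) auto
qed

lemma measurable_ea_run_restr:
  "(\<lambda>\<omega>. ea_run_restr n s \<omega> t) \<in> stream_space (measure_pmf p) \<rightarrow>\<^sub>M count_space UNIV"
proof (induction t)
  case 0
  then show ?case by simp
next
  case (Suc t)
  have "(\<lambda>\<omega>. ea_run_restr n s \<omega> (Suc t)) =
      (\<lambda>\<omega>. ea_step n (ea_run_restr n s \<omega> t) (restrict_bits n (\<omega> !! t)))"
    by (simp add: ea_run_restr_def)
  also have "\<dots> \<in> stream_space (measure_pmf p) \<rightarrow>\<^sub>M count_space UNIV"
  proof (rule measurable_compose_countable'[where I = "bitstrings n"])
    show "(\<lambda>\<omega>. ea_step n (ea_run_restr n s \<omega> t) b)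
        \<in> stream_space (measure_pmf p) \<rightarrow>\<^sub>M count_space UNIV" for b
      using measurable_compose[OF Suc.IH measurable_count_space[of "\<lambda>z. ea_step n z b"]] by simp
    show "(\<lambda>\<omega>. restrict_bits n (\<omega> !! t))
        \<in> stream_space (measure_pmf p) \<rightarrow>\<^sub>M count_space (bitstrings n)"
      by (intro measurable_compose[OF measurable_snth]) (simp add: restrict_bits_in_bitstrings)
  qed (rule countable_finite[OF finite_bitstrings])
  finally show ?case .
qed

lemma sets_switch_within: "switch_within n k D T s \<in> sets (stream_space (measure_pmf p))"
proof -
  have pred: "{\<omega>. P (ea_run_restr n s \<omega> t)} \<in> sets (stream_space (measure_pmf p))" for P t
    using measurable_sets[OF measurable_ea_run_restr, of "{z. P z}"]
    by (simp add: space_stream_space vimage_def)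
  have "switch_within n k D T s =
    (\<Union>t\<le>T. {\<omega>. snd (ea_run_restr n s \<omega> t) = k} \<inter>
            (\<Inter>u\<le>t. {\<omega>. D < real (dist_opt n (fst (ea_run_restr n s \<omega> u)))}))"
    unfolding switch_within_def by auto
  also have "\<dots> \<in> sets (stream_space (measure_pmf p))"
    by (intro sets.finite_UN sets.Int sets.finite_INT pred) auto
  finally show ?thesis .
qed

lemma onemax_le: "onemax n x \<le> n"
  unfolding onemax_def by (rule order_trans[OF card_mono[of "{..<n}"]]) auto

lemma dist_opt_le: "dist_opt n x \<le> n"
  unfolding dist_opt_def by simp

lemma dist_opt_eq_card_zeros: "dist_opt n x = card {i. i < n \<and> \<not> x i}"
proof -
  have "n = card ({..<n} :: nat set)" by simp
  also have "\<dots> = card ({i. i < n \<and> x i} \<union> {i. i < n \<and> \<not> x i})"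
    by (intro arg_cong[where f = card]) auto
  also have "\<dots> = card {i. i < n \<and> x i} + card {i. i < n \<and> \<not> x i}"
    by (rule card_Un_disjoint) auto
  finally have "n = card {i. i < n \<and> x i} + card {i. i < n \<and> \<not> x i}" .
  then show ?thesis unfolding dist_opt_def onemax_def by simp
qed

lemma dist_opt_less_if_onemax_less: "onemax n x < onemax n y \<Longrightarrow> dist_opt n y < dist_opt n x"
  unfolding dist_opt_def using onemax_le[of n y] by simp

lemma onemax_flip_zero_bit:
  assumes "i < n" "\<not> x i"
  shows "onemax n (flip x (\<lambda>j. j = i)) = Suc (onemax n x)"
proof -
  have "{j. j < n \<and> flip x (\<lambda>j. j = i) j} = insert i {j. j < n \<and> x j}"
    using assms unfolding flip_def by auto
  then show ?thesis unfolding onemax_def using assms by simp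
qed

definition single_flip_prob :: "nat \<Rightarrow> real" where
  "single_flip_prob n = (1 / real n) * (1 - 1 / real n) ^ (n - 1)"

lemma single_flip_prob_nonneg: "0 \<le> single_flip_prob n"
  unfolding single_flip_prob_def by (cases "n = 0") auto

lemma mult_single_flip_prob_le_1: "real n * single_flip_prob n \<le> 1"
proof (cases "n = 0")
  case False
  then have "(1 - 1 / real n) ^ (n - 1) \<le> 1" by (intro power_le_one) auto
  then show ?thesis using False unfolding single_flip_prob_def by simp
qed (simp add: single_flip_prob_def)

lemma single_flip_prob_ge:
  assumes "1 \<le> n"
  shows "1 / (exp 1 * real n) \<le> single_flip_prob n"
proof (cases "n = 1")
  case True
  then show ?thesis by (simp add: single_flip_prob_def)
next
  case False
  define m where "m = n - 1"
  have m: "0 < m" "real n = real m + 1" using assms False unfolding m_def by auto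
  have "(1 + 1 / real m) ^ m \<le> exp 1"
    using exp_ge_one_plus_x_over_n_power_n[where x = 1 and n = m] m by simp
  moreover have "(1 - 1 / real n) ^ (n - 1) = 1 / (1 + 1 / real m) ^ m"
    using m by (simp add: m_def field_simps)
  ultimately have "1 / exp 1 \<le> (1 - 1 / real n) ^ (n - 1)"
    by (simp add: frac_le add_pos_nonneg)
  then have "1 / real n * (1 / exp 1) \<le> single_flip_prob n"
    unfolding single_flip_prob_def by (intro mult_left_mono) auto
  then show ?thesis by (simp add: mult.commute)
qed

lemma pmf_mask_single_bit:
  assumes "i < n"
  shows "pmf (mask_pmf n) (\<lambda>j. j = i) = single_flip_prob n"
proof -
  let ?b = "\<lambda>v. pmf (bernoulli_pmf (1 / real n)) v"
  have "pmf (mask_pmf n) (\<lambda>j. j = i) = (\<Prod>j\<in>{..<n}. ?b (j = i))"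
    unfolding mask_pmf_def using assms by (subst pmf_Pi') auto
  also have "{..<n} = insert i ({..<n} - {i})" using assms by auto
  also have "(\<Prod>j\<in>insert i ({..<n} - {i}). ?b (j = i)) = ?b True * (\<Prod>j\<in>{..<n} - {i}. ?b False)"
    by (subst prod.insert) (auto intro!: prod.cong)
  also have "\<dots> = single_flip_prob n"
    using assms unfolding single_flip_prob_def by (simp add: card_Diff_singleton)
  finally show ?thesis .
qed

lemma prob_improve_ge:
  "real (dist_opt n x) * single_flip_prob n \<le>
     measure (mask_pmf n) {m. onemax n x < onemax n (flip x (restrict_bits n m))}"
proof -
  define Z where "Z = {i. i < n \<and> \<not> x i}"
  define e where "e = (\<lambda>i j::nat. j = i)"
  have "inj_on e Z" unfolding e_def inj_on_def by metis
  have "e ` Z \<subseteq> {m. onemax n x < onemax n (flip x (restrict_bits n m))}"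
  proof
    fix m assume "m \<in> e ` Z"
    then obtain i where i: "i < n" "\<not> x i" "m = e i" unfolding Z_def by auto
    then have "restrict_bits n m = (\<lambda>j. j = i)" unfolding restrict_bits_def e_def by auto
    then show "m \<in> {m. onemax n x < onemax n (flip x (restrict_bits n m))}"
      using onemax_flip_zero_bit[of i n x] i by simp
  qed
  then have "measure (mask_pmf n) (e ` Z) \<le>
      measure (mask_pmf n) {m. onemax n x < onemax n (flip x (restrict_bits n m))}"
    by (intro measure_pmf.finite_measure_mono) auto
  moreover have "measure (mask_pmf n) (e ` Z) = (\<Sum>i\<in>Z. pmf (mask_pmf n) (e i))"
    using \<open>inj_on e Z\<close> by (simp add: Z_def measure_measure_pmf_finite sum.reindex)
  moreover have "\<dots> = real (dist_opt n x) * single_flip_prob n"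
    by (simp add: Z_def e_def pmf_mask_single_bit dist_opt_eq_card_zeros)
  ultimately show ?thesis by simp
qed

definition fail_prob_bound :: "nat \<Rightarrow> nat \<Rightarrow> real" where
  "fail_prob_bound n d = 1 - real d * single_flip_prob n"

definition streak_bound :: "nat \<Rightarrow> nat \<Rightarrow> nat \<Rightarrow> nat \<Rightarrow> real" where
  "streak_bound n k d c = (if c \<le> k then fail_prob_bound n d ^ (k - c) else 0)"

definition lower_levels_bound :: "nat \<Rightarrow> nat \<Rightarrow> real \<Rightarrow> nat \<Rightarrow> real" where
  "lower_levels_bound n k D d = (\<Sum>d'\<in>{d'. D < real d' \<and> d' < d}. fail_prob_bound n d' ^ k)"

(* Bounds the probability of an early switch from the state (x, c): either the current streak
  of c failures is completed at the current distance, or a full streak of k failures occurs at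
  a smaller distance above D. *)
definition switch_potential :: "nat \<Rightarrow> nat \<Rightarrow> real \<Rightarrow> (nat \<Rightarrow> bool) \<times> nat \<Rightarrow> real" where
  "switch_potential n k D s =
     (if real (dist_opt n (fst s)) \<le> D then 0
      else streak_bound n k (dist_opt n (fst s)) (snd s) +
           lower_levels_bound n k D (dist_opt n (fst s)))"

lemma fail_prob_bound_nonneg: "d \<le> n \<Longrightarrow> 0 \<le> fail_prob_bound n d"
  using mult_right_mono[of "real d" "real n" "single_flip_prob n"]
    single_flip_prob_nonneg[of n] mult_single_flip_prob_le_1[of n]
  unfolding fail_prob_bound_def by simp

lemma streak_bound_nonneg: "d \<le> n \<Longrightarrow> 0 \<le> streak_bound n k d c"
  unfolding streak_bound_def by (simp add: fail_prob_bound_nonneg)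

lemma streak_bound_self: "streak_bound n k d k = 1"
  unfolding streak_bound_def by simp

lemma streak_bound_Suc:
  "c \<noteq> k \<Longrightarrow> streak_bound n k d c = fail_prob_bound n d * streak_bound n k d (Suc c)"
  by (cases "c < k") (auto simp: streak_bound_def power_Suc[symmetric] Suc_diff_Suc)

lemma finite_levels: "finite {d'. D < real d' \<and> d' < d}"
  by (rule finite_subset[of _ "{..<d}"]) auto

lemma lower_levels_bound_nonneg: "d \<le> n \<Longrightarrow> 0 \<le> lower_levels_bound n k D d"
  unfolding lower_levels_bound_def by (intro sum_nonneg zero_le_power fail_prob_bound_nonneg) auto

lemma lower_levels_bound_step:
  assumes "d' < d" "d \<le> n" "D < real d'"
  shows "fail_prob_bound n d' ^ k + lower_levels_bound n k D d' \<le> lower_levels_bound n k D d"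
proof -
  have "fail_prob_bound n d' ^ k + lower_levels_bound n k D d' =
      (\<Sum>d''\<in>insert d' {d''. D < real d'' \<and> d'' < d'}. fail_prob_bound n d'' ^ k)"
    unfolding lower_levels_bound_def by (subst sum.insert) (auto simp: finite_levels)
  also have "\<dots> \<le> lower_levels_bound n k D d"
    unfolding lower_levels_bound_def using assms
    by (intro sum_mono2 finite_levels) (auto intro!: zero_le_power fail_prob_bound_nonneg)
  finally show ?thesis .
qed

lemma switch_potential_ge_1:
  "D < real (dist_opt n (fst s)) \<Longrightarrow> snd s = k \<Longrightarrow> 1 \<le> switch_potential n k D s"
  unfolding switch_potential_def
  using lower_levels_bound_nonneg[OF dist_opt_le] by (simp add: streak_bound_self)

lemma switch_potential_ea_step:
  assumes "D < real (dist_opt n x)"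
  shows "switch_potential n k D (ea_step n (x, c) m) \<le> lower_levels_bound n k D (dist_opt n x) +
     (if onemax n x < onemax n (flip x m) then 0 else streak_bound n k (dist_opt n x) (Suc c))"
proof (cases "onemax n x < onemax n (flip x m)")
  case True
  define d' where "d' = dist_opt n (flip x m)"
  have "d' < dist_opt n x"
    unfolding d'_def using True by (rule dist_opt_less_if_onemax_less)
  moreover have "ea_step n (x, c) m = (flip x m, 0)"
    using True unfolding ea_step_def by simp
  ultimately show ?thesis
    using True lower_levels_bound_step[of d' "dist_opt n x" n D k] dist_opt_le[of n x]
      lower_levels_bound_nonneg[of "dist_opt n x" n k D]
    by (auto simp: switch_potential_def streak_bound_def d'_def)
next
  case False
  then have "dist_opt n (fst (ea_step n (x, c) m)) = dist_opt n x"
    and "snd (ea_step n (x, c) m) = Suc c"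
    unfolding ea_step_def dist_opt_def by (auto simp: Let_def)
  then show ?thesis
    using False assms by (simp add: switch_potential_def)
qed

lemma prob_no_improve_le:
  "measure (mask_pmf n) {m. \<not> onemax n x < onemax n (flip x (restrict_bits n m))}
     \<le> fail_prob_bound n (dist_opt n x)"
  using measure_pmf.prob_compl[of "{m. onemax n x < onemax n (flip x (restrict_bits n m))}"]
    prob_improve_ge[of n x]
  by (simp add: fail_prob_bound_def Compl_eq_Diff_UNIV[symmetric] Collect_neg_eq[symmetric])

lemma nn_integral_switch_potential_ea_step_le:
  assumes "D < real (dist_opt n x)" "c \<noteq> k"
  shows "(\<integral>\<^sup>+m. ennreal (switch_potential n k D (ea_step n (x, c) (restrict_bits n m))) \<partial>mask_pmf n)
    \<le> ennreal (switch_potential n k D (x, c))"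
proof -
  define d where "d = dist_opt n x"
  define L where "L = lower_levels_bound n k D d"
  define S where "S = streak_bound n k d (Suc c)"
  define Fail where "Fail = {m. \<not> onemax n x < onemax n (flip x (restrict_bits n m))}"
  have L: "0 \<le> L" unfolding L_def d_def by (rule lower_levels_bound_nonneg[OF dist_opt_le])
  have S: "0 \<le> S" unfolding S_def d_def by (rule streak_bound_nonneg[OF dist_opt_le])
  have "switch_potential n k D (ea_step n (x, c) (restrict_bits n m)) \<le> L + S * indicator Fail m"
    for m
    using switch_potential_ea_step[OF assms(1), of k c "restrict_bits n m"]
    by (auto simp: L_def S_def d_def Fail_def split: if_splits)
  then have
      "(\<integral>\<^sup>+m. ennreal (switch_potential n k D (ea_step n (x, c) (restrict_bits n m))) \<partial>mask_pmf n)
      \<le> (\<integral>\<^sup>+m. ennreal (L + S * indicator Fail m) \<partial>mask_pmf n)"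
    by (intro nn_integral_mono ennreal_leI)
  also have "\<dots> = (\<integral>\<^sup>+m. ennreal L + ennreal S * indicator Fail m \<partial>mask_pmf n)"
    using L S
    by (intro nn_integral_cong) (simp add: ennreal_plus ennreal_mult split: split_indicator)
  also have "\<dots> = ennreal (L + S * measure (mask_pmf n) Fail)"
    using L S
    by (simp add: nn_integral_add nn_integral_cmult_indicator measure_pmf.emeasure_space_1
        measure_pmf.emeasure_eq_measure ennreal_plus ennreal_mult)
  also have "\<dots> \<le> ennreal (L + S * fail_prob_bound n d)"
    using prob_no_improve_le[of n x] S unfolding Fail_def d_def
    by (intro ennreal_leI add_left_mono mult_left_mono)
  also have "\<dots> = ennreal (switch_potential n k D (x, c))"
    using assms
    by (simp add: switch_potential_def streak_bound_Suc L_def S_def d_def mult.commute add.commute)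
  finally show ?thesis .
qed

lemma emeasure_switch_within_le:
  "emeasure (stream_space (mask_pmf n)) (switch_within n k D T s)
     \<le> ennreal (switch_potential n k D s)"
proof -
  let ?M = "stream_space (mask_pmf n)"
  interpret M: prob_space ?M
    by (rule prob_space.prob_space_stream_space[OF prob_space_measure_pmf])
  have switched: "emeasure ?M A \<le> ennreal (switch_potential n k D s)"
    if "D < real (dist_opt n (fst s))" "snd s = k" for A s
    using M.emeasure_le_1[of A] switch_potential_ge_1[OF that] ennreal_leI order_trans by fastforce
  show ?thesis
  proof (induction T arbitrary: s)
    case 0
    then show ?case
      using switched
      by (cases "snd s = k \<and> D < real (dist_opt n (fst s))") (auto simp: switch_within_0)
  next
    case (Suc T)
    obtain x c where s: "s = (x, c)" by fastforce
    consider "\<not> D < real (dist_opt n x)" | "c = k" | "D < real (dist_opt n x)" "c \<noteq> k"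
      by auto
    then show ?case
    proof cases
      case 3
      have shifted: "{\<omega> \<in> space ?M. m ## \<omega> \<in> switch_within n k D (Suc T) s} =
          switch_within n k D T (ea_step n s (restrict_bits n m))" for m
        using 3 by (auto simp: switch_within_Suc space_stream_space s)
      have "emeasure ?M (switch_within n k D (Suc T) s) =
          (\<integral>\<^sup>+m. emeasure ?M (switch_within n k D T (ea_step n s (restrict_bits n m)))
            \<partial>mask_pmf n)"
        unfolding shifted[symmetric]
        by (rule prob_space.emeasure_stream_space[OF prob_space_measure_pmf sets_switch_within])
      also have "\<dots> \<le>
          (\<integral>\<^sup>+m. ennreal (switch_potential n k D (ea_step n s (restrict_bits n m))) \<partial>mask_pmf n)"
        by (intro nn_integral_mono Suc.IH)
      also have "\<dots> \<le> ennreal (switch_potential n k D s)"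
        unfolding s using 3 by (rule nn_integral_switch_potential_ea_step_le)
      finally show ?thesis .
    qed (auto simp: switched switch_within_Suc s)
  qed
qed

lemma incseq_switch_within: "incseq (\<lambda>T. switch_within n k D T s)"
  unfolding incseq_def switch_within_def by (auto intro: order_trans)

lemma emeasure_switch_eventually_le:
  "emeasure (stream_space (mask_pmf n)) (\<Union>T. switch_within n k D T s)
     \<le> ennreal (switch_potential n k D s)"
proof -
  have "emeasure (stream_space (mask_pmf n)) (\<Union>T. switch_within n k D T s) =
      (SUP T. emeasure (stream_space (mask_pmf n)) (switch_within n k D T s))"
    by (rule SUP_emeasure_incseq[symmetric]) (auto simp: sets_switch_within incseq_switch_within)
  also have "\<dots> \<le> ennreal (switch_potential n k D s)"
    by (rule SUP_least) (rule emeasure_switch_within_le)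
  finally show ?thesis .
qed

lemma fail_prob_bound_pow_le_exp:
  assumes "1 \<le> n" "d \<le> n"
  shows "fail_prob_bound n d ^ k \<le> exp (- real d * real k / (exp 1 * real n))"
proof -
  have "fail_prob_bound n d \<le> exp (- (real d * single_flip_prob n))"
    using exp_ge_add_one_self[of "- (real d * single_flip_prob n)"]
    by (simp add: fail_prob_bound_def)
  then have "fail_prob_bound n d ^ k \<le> exp (- (real d * single_flip_prob n)) ^ k"
    by (intro power_mono fail_prob_bound_nonneg assms(2))
  also have "\<dots> = exp (- (real d * single_flip_prob n * real k))"
    by (simp add: exp_of_nat_mult[symmetric] mult.commute)
  also have "\<dots> \<le> exp (- (real d * (1 / (exp 1 * real n)) * real k))"
    using single_flip_prob_ge[OF assms(1)]
    by (intro exp_mono le_imp_neg_le mult_right_mono mult_left_mono) auto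
  finally show ?thesis by simp
qed

lemma switch_potential_start_le:
  assumes n: "1 \<le> n" and k: "1 \<le> k" and D: "D = 2 * exp 1 * real n * ln (real n) / real k"
  shows "switch_potential n k D (x, 0) \<le> 1 / real n"
proof -
  have "0 \<le> D" unfolding D using n by simp
  have level: "fail_prob_bound n d' ^ k \<le> 1 / real n ^ 2" if "D < real d'" "d' \<le> n" for d'
  proof -
    have "- real d' * real k / (exp 1 * real n) \<le> - D * real k / (exp 1 * real n)"
      using that n k by (intro divide_right_mono mult_right_mono) auto
    also have "\<dots> = - ln (real n ^ 2)"
      unfolding D using n k by (simp add: ln_realpow field_simps)
    finally have "exp (- real d' * real k / (exp 1 * real n)) \<le> exp (- ln (real n ^ 2))"
      by simp
    also have "\<dots> = 1 / real n ^ 2" using n by (simp add: exp_minus inverse_eq_divide)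
    finally show ?thesis using fail_prob_bound_pow_le_exp[OF n that(2), of k] by linarith
  qed
  define d where "d = dist_opt n x"
  have "d \<le> n" unfolding d_def by (rule dist_opt_le)
  show ?thesis
  proof (cases "real d \<le> D")
    case False
    have "card {d'. D < real d' \<and> d' < d} \<le> card {1..<d}"
      using \<open>0 \<le> D\<close> by (intro card_mono) auto
    moreover have "0 < d" using False \<open>0 \<le> D\<close> by simp
    ultimately have card: "1 + real (card {d'. D < real d' \<and> d' < d}) \<le> real n"
      using \<open>d \<le> n\<close> by simp
    have "switch_potential n k D (x, 0) = fail_prob_bound n d ^ k + lower_levels_bound n k D d"
      using False by (simp add: switch_potential_def streak_bound_def d_def)
    also have "\<dots> \<le> 1 / real n ^ 2 + (\<Sum>d'\<in>{d'. D < real d' \<and> d' < d}. 1 / real n ^ 2)"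
      unfolding lower_levels_bound_def using False \<open>d \<le> n\<close>
      by (intro add_mono level sum_mono) auto
    also have "\<dots> = (1 + real (card {d'. D < real d' \<and> d' < d})) / real n ^ 2"
      by (simp add: add_divide_distrib)
    also have "\<dots> \<le> real n / real n ^ 2"
      using card by (intro divide_right_mono) auto
    also have "\<dots> = 1 / real n" by (simp add: power2_eq_square)
    finally show ?thesis .
  qed (simp add: switch_potential_def d_def n)
qed

lemma switch_early_eq_Union:
  "switch_early n k D =
     (\<Union>b\<in>bitstrings n. {x0. restrict_bits n x0 = b} \<times> (\<Union>T. switch_within n k D T (b, 0)))"
proof -
  have "(x0, \<omega>) \<in> switch_early n k D \<longleftrightarrow>
      \<omega> \<in> (\<Union>T. switch_within n k D T (restrict_bits n x0, 0))" for x0 \<omega>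
    unfolding switch_early_def switch_within_def
    by (auto simp: ea_run_restr_ea_run dist_opt_restrict_bits)
  then show ?thesis using restrict_bits_in_bitstrings by fast
qed

lemma sets_switch_early: "switch_early n k D \<in> sets (ea_space n)"
proof -
  have "(\<Union>T. switch_within n k D T b) \<in> sets (stream_space (mask_pmf n))" for b
    using sets_switch_within by blast
  then show ?thesis
    unfolding switch_early_eq_Union ea_space_def
    by (auto intro!: sets.finite_UN[OF finite_bitstrings] pair_measureI)
qed

lemma measure_switch_early_le:
  assumes "1 \<le> n" "1 \<le> k" "D = 2 * exp 1 * real n * ln (real n) / real k"
  shows "measure (ea_space n) (switch_early n k D) \<le> 1 / real n"
proof -
  interpret S: prob_space "stream_space (mask_pmf n)"
    by (rule prob_space.prob_space_stream_space[OF prob_space_measure_pmf])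
  have "Pair x0 -` switch_early n k D = (\<Union>T. switch_within n k D T (restrict_bits n x0, 0))"
    for x0
    unfolding switch_early_eq_Union using restrict_bits_in_bitstrings by auto
  then have "emeasure (ea_space n) (switch_early n k D) =
      (\<integral>\<^sup>+x0. emeasure (stream_space (mask_pmf n))
          (\<Union>T. switch_within n k D T (restrict_bits n x0, 0)) \<partial>init_pmf n)"
    using S.emeasure_pair_measure_alt[OF sets_switch_early[unfolded ea_space_def]]
    by (simp add: ea_space_def)
  also have "\<dots> \<le> (\<integral>\<^sup>+x0. ennreal (1 / real n) \<partial>init_pmf n)"
    using emeasure_switch_eventually_le switch_potential_start_le[OF assms]
    by (intro nn_integral_mono) (meson ennreal_leI order_trans)
  also have "\<dots> = ennreal (1 / real n)"
    by (simp add: measure_pmf.emeasure_space_1)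
  finally show ?thesis
    unfolding measure_def by (intro enn2real_leI) auto
qed

lemma bigtheta_n_ln_n_div_k:
  fixes lam k :: "nat \<Rightarrow> nat" and c :: real
  assumes "c \<noteq> 0"
    and "(\<lambda>n. real (lam n)) \<in> \<Theta>(\<lambda>n. ln (real n))"
    and "(\<lambda>n. real (k n)) \<in> \<Theta>(\<lambda>n. real (lam n) * ln (real n))"
  shows "(\<lambda>n. c * real n * ln (real n) / real (k n)) \<in> \<Theta>(\<lambda>n. real n / ln (real n))"
proof -
  have "(\<lambda>n. real (k n)) \<in> \<Theta>(\<lambda>n. ln (real n) * ln (real n))"
    using assms(3) landau_theta.mult_right[OF assms(2)] by (rule landau_theta.trans)
  then have "(\<lambda>n. c * real n * ln (real n) / real (k n)) \<in>
      \<Theta>(\<lambda>n. c * real n * ln (real n) / (ln (real n) * ln (real n)))"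
    by (rule bigtheta_divide[OF bigtheta_refl])
  also have "(\<lambda>n. c * real n * ln (real n) / (ln (real n) * ln (real n)))
      \<in> \<Theta>(\<lambda>n. c * (real n / ln (real n)))"
  proof (rule bigthetaI_cong)
    show "\<forall>\<^sub>F n in sequentially.
        c * real n * ln (real n) / (ln (real n) * ln (real n)) = c * (real n / ln (real n))"
      using eventually_gt_at_top[of "1::nat"] by eventually_elim simp
  qed
  also have "(\<lambda>n. c * (real n / ln (real n))) \<in> \<Theta>(\<lambda>n. real n / ln (real n))"
    using assms(1) by (subst landau_theta.cmult_in_iff) simp_all
  finally show ?thesis .
qed

theorem lemma5p2:
  fixes lam k :: "nat \<Rightarrow> nat"
  assumes "(\<lambda>n. real (lam n)) \<in> \<Theta>(\<lambda>n. ln (real n))"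
    and "(\<lambda>n. real (k n)) \<in> \<Theta>(\<lambda>n. real (lam n) * ln (real n))"
  defines "D \<equiv> (\<lambda>n. 2 * exp 1 * real n * ln (real n) / real (k n))"
  shows "D \<in> \<Theta>(\<lambda>n. real n / ln (real n)) \<and>
         (\<forall>n. 1 \<le> n \<and> 1 \<le> k n \<longrightarrow>
              switch_early n (k n) (D n) \<in> sets (ea_space n) \<and>
              measure (ea_space n) (switch_early n (k n) (D n)) \<le> 1 / real n)"
proof (intro conjI allI impI)
  show "D \<in> \<Theta>(\<lambda>n. real n / ln (real n))"
    unfolding D_def by (intro bigtheta_n_ln_n_div_k[OF _ assms(1,2)]) simp
  fix n assume n: "1 \<le> n \<and> 1 \<le> k n"
  show "switch_early n (k n) (D n) \<in> sets (ea_space n)"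
    by (rule sets_switch_early)
  show "measure (ea_space n) (switch_early n (k n) (D n)) \<le> 1 / real n"
    using n unfolding D_def by (intro measure_switch_early_le) simp_all
qed

end
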